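(* Let $m>1$ be odd, $a=\frac{m+1}2$, $\bar i=m+1-i$ for $i\in[m]$, and $\kappa=\frac{m^2-1}2$. A set $S\subseteq O_m$ is valid if and only if all of the following hold: (1) $\{(i,j)\in O_m:(i<j\text{ and }i<\bar j)\text{ or }(i>j\text{ and }i>\bar j)\}\subseteq S$; (2) $\{(i,j)\in O_m:(i>j\text{ and }i<\bar j)\text{ or }(i<j\text{ and }i>\bar j)\}\cap S=\emptyset$; (3) for each $1\le i\le\frac{m-1}2$ exactly one of the following holds: (a) $\{(i,i),(\bar i,\bar i)\}\subseteq S$ and $\{(i,\bar i),(\bar i,i)\}\cap S=\emptyset$; (b) $\{(i,\bar i),(\bar i,i)\}\subseteq S$ and $\{(i,i),(\bar i,\bar i)\}\cap S=\emptyset$. In particular there are exactly $2^{(m-1)/2}$ valid sets.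
   Context: $O_m=([m]\times[m])\setminus\{(a,a)\}$. Let $\tau:O_m\to O_m$, $\tau(i,j)=(j,\bar i)$, extended to subsets elementwise, and $\iota(S)=O_m\setminus S$ for $S\subseteq O_m$. A subset $S\subseteq O_m$ is valid if (i) $|S|=\kappa$, (ii) $\tau(S)=\iota(S)$, and (iii) for every $i\in[m]$, $|\{j:(i,j)\in S\}|=|i-\bar i|$. *)

theory Defs
  imports Main
begin

definition bar :: "nat \<Rightarrow> nat \<Rightarrow> nat" where
  "bar m i = m + 1 - i"

definition centre :: "nat \<Rightarrow> nat" where
  "centre m = (m + 1) div 2"

definition kappa :: "nat \<Rightarrow> nat" where
  "kappa m = (m^2 - 1) div 2"

definition Om :: "nat \<Rightarrow> (nat \<times> nat) set" where
  "Om m = ({1..m} \<times> {1..m}) - {(centre m, centre m)}"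

definition tau :: "nat \<Rightarrow> nat \<times> nat \<Rightarrow> nat \<times> nat" where
  "tau m p = (snd p, bar m (fst p))"

definition iota :: "nat \<Rightarrow> (nat \<times> nat) set \<Rightarrow> (nat \<times> nat) set" where
  "iota m S = Om m - S"

definition valid :: "nat \<Rightarrow> (nat \<times> nat) set \<Rightarrow> bool" where
  "valid m S \<longleftrightarrow> S \<subseteq> Om m \<and> card S = kappa m \<and> tau m ` S = iota m S \<and>
     (\<forall>i\<in>{1..m}. int (card {j. (i, j) \<in> S}) = \<bar>int i - int (bar m i)\<bar>)"

end

theory Submission
  imports Defs
begin

(* Write m = 2h+1.  The map tau(i,j) = (j, m+1-i) is the quarter turn of the grid
   about its removed centre, and condition (ii) of validity says that S contains
   exactly one cell of every pair {p, tau p} ("S alternates").  This alone already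
   fixes |S| = kappa, and makes S invariant under the half turn.
   The two diagonals i = j and i + j = m+1 cut the grid into four wedges.  Using the
   row counts (iii) for the upper rows, an induction over the rows shows that a valid
   set contains the top wedge; the half and quarter turns then place the bottom wedge
   inside S, the side wedges outside S, and make the four diagonal corners of each
   ring alternate.  We call such sets "shaped".  Conversely, a shaped set alternates
   and has the required row counts, so valid = shaped.  Finally a shaped set is
   determined by which cells (k,k), 1 <= k <= h, it contains, and every choice occurs,
   giving 2^h valid sets. *)

lemma Om_odd_iff:
  "(i, j) \<in> Om (2*h+1) \<longleftrightarrow> i \<in> {1..2*h+1} \<and> j \<in> {1..2*h+1} \<and> (i, j) \<noteq> (h+1, h+1)"
  by (auto simp: Om_def centre_def)

lemma tau_odd: "tau (2*h+1) (i, j) = (j, 2*h+2-i)"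
  by (simp add: tau_def bar_def)

(* Simp-normal forms (the simplifier rewrites 2*h+1 to Suc (2*h)). *)
lemmas odd_grid_simps [simp] = Om_odd_iff[simplified] tau_odd[simplified]

lemma inj_on_tau_odd: "inj_on (tau (2*h+1)) (Om (2*h+1))"
  by (auto simp: inj_on_def)

definition alternating :: "nat \<Rightarrow> (nat \<times> nat) set \<Rightarrow> bool" where
  "alternating h S \<longleftrightarrow> (\<forall>i j. (i, j) \<in> Om (2*h+1) \<longrightarrow> ((j, 2*h+2-i) \<in> S \<longleftrightarrow> (i, j) \<notin> S))"

lemma tau_image_complement_iff:
  assumes S: "S \<subseteq> Om (2*h+1)"
  shows "tau (2*h+1) ` S = iota (2*h+1) S \<longleftrightarrow> alternating h S"
proof
  assume eq: "tau (2*h+1) ` S = iota (2*h+1) S"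
  show "alternating h S" unfolding alternating_def
  proof (intro allI impI)
    fix i j assume ij: "(i, j) \<in> Om (2*h+1)"
    have "(j, 2*h+2-i) \<in> tau (2*h+1) ` S \<longleftrightarrow> (i, j) \<in> S"
      using inj_on_image_mem_iff[OF inj_on_tau_odd ij S] by (simp add: tau_odd)
    moreover have "(j, 2*h+2-i) \<in> Om (2*h+1)" using ij by auto
    ultimately show "(j, 2*h+2-i) \<in> S \<longleftrightarrow> (i, j) \<notin> S"
      using eq by (auto simp: iota_def)
  qed
next
  assume alt: "alternating h S"
  show "tau (2*h+1) ` S = iota (2*h+1) S"
  proof (intro equalityI subsetI)
    fix p assume "p \<in> tau (2*h+1) ` S"
    then obtain i j where ij: "(i, j) \<in> S" "p = (j, 2*h+2-i)" by auto
    have "(i, j) \<in> Om (2*h+1)" using ij S by blast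
    then have "(j, 2*h+2-i) \<in> Om (2*h+1)" "(j, 2*h+2-i) \<notin> S"
      using alt ij unfolding alternating_def by auto
    then show "p \<in> iota (2*h+1) S" using ij by (simp add: iota_def)
  next
    fix p assume p: "p \<in> iota (2*h+1) S"
    obtain i j where ij: "p = (i, j)" "(i, j) \<in> Om (2*h+1)" "(i, j) \<notin> S"
      using p by (cases p) (simp add: iota_def)
    have pre: "(2*h+2-j, i) \<in> Om (2*h+1)" "tau (2*h+1) (2*h+2-j, i) = (i, j)"
      using ij by auto
    then have "(2*h+2-j, i) \<in> S"
      using alt ij unfolding alternating_def by (metis tau_odd)
    then show "p \<in> tau (2*h+1) ` S" using pre ij by (metis image_eqI)
  qed
qed

lemma card_Om_odd: "card (Om (2*h+1)) = (2*h+1)^2 - 1"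
  by (simp add: Om_def centre_def card_Diff_singleton power2_eq_square)

lemma card_alternating:
  assumes S: "S \<subseteq> Om (2*h+1)" and alt: "alternating h S"
  shows "card S = kappa (2*h+1)"
proof -
  have fin: "finite (Om (2*h+1))" by (simp add: Om_def)
  have "card S = card (tau (2*h+1) ` S)"
    using inj_on_subset[OF inj_on_tau_odd S] by (simp add: card_image)
  also have "\<dots> = card (Om (2*h+1)) - card S"
    using tau_image_complement_iff[OF S] alt S fin
    by (simp add: iota_def card_Diff_subset finite_subset)
  finally have "2 * card S = (2*h+1)^2 - 1"
    using card_Om_odd[of h] card_mono[OF fin S] by linarith
  then show ?thesis unfolding kappa_def by simp
qed

(* Applying the alternation twice: an alternating set is invariant under the half turn. *)
lemma alternating_rotate_half:
  assumes alt: "alternating h S" and ij: "(i, j) \<in> Om (2*h+1)"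
  shows "(2*h+2-i, 2*h+2-j) \<in> S \<longleftrightarrow> (i, j) \<in> S"
proof -
  have "(j, 2*h+2-i) \<in> Om (2*h+1)" using ij by auto
  then have "(2*h+2-i, 2*h+2-j) \<in> S \<longleftrightarrow> (j, 2*h+2-i) \<notin> S"
    using alt unfolding alternating_def by blast
  also have "\<dots> \<longleftrightarrow> (i, j) \<in> S" using alt ij unfolding alternating_def by blast
  finally show ?thesis .
qed

(* The diagonals i = j and i + j = 2h+2 cut the grid into four wedges.  The top
   (i < j, i+j < 2h+2) and bottom wedge are the cells forced into a valid set ... *)
definition wedge_in :: "nat \<Rightarrow> nat \<Rightarrow> nat \<Rightarrow> bool" where
  "wedge_in h i j \<longleftrightarrow> (i < j \<and> i < 2*h+2-j) \<or> (j < i \<and> 2*h+2-j < i)"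

(* ... and the left and right wedge are the cells forced out of it. *)
definition wedge_out :: "nat \<Rightarrow> nat \<Rightarrow> nat \<Rightarrow> bool" where
  "wedge_out h i j \<longleftrightarrow> (j < i \<and> i < 2*h+2-j) \<or> (i < j \<and> 2*h+2-j < i)"

lemma wedge_in_rotate: "(i, j) \<in> Om (2*h+1) \<Longrightarrow> wedge_in h j (2*h+2-i) \<longleftrightarrow> wedge_out h i j"
  by (auto simp: wedge_in_def wedge_out_def)

lemma wedge_out_rotate: "(i, j) \<in> Om (2*h+1) \<Longrightarrow> wedge_out h j (2*h+2-i) \<longleftrightarrow> wedge_in h i j"
  by (auto simp: wedge_in_def wedge_out_def)

lemma Om_odd_cases:
  assumes "(i, j) \<in> Om (2*h+1)"
  obtains "wedge_in h i j" | "wedge_out h i j" | "j = i" | "j = 2*h+2-i"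
proof -
  have "wedge_in h i j \<or> wedge_out h i j \<or> j = i \<or> j = 2*h+2-i"
    using assms unfolding wedge_in_def wedge_out_def by simp linarith
  then show ?thesis using that by blast
qed

lemma diagonal_not_wedge:
  "(i, j) \<in> Om (2*h+1) \<Longrightarrow> j = i \<or> j = 2*h+2-i \<Longrightarrow> \<not> wedge_in h i j \<and> \<not> wedge_out h i j"
  by (auto simp: wedge_in_def wedge_out_def)

lemma wedge_out_exclusive:
  "(i, j) \<in> Om (2*h+1) \<Longrightarrow> wedge_out h i j \<Longrightarrow> \<not> wedge_in h i j \<and> j \<noteq> i \<and> j \<noteq> 2*h+2-i"
  by (auto simp: wedge_in_def wedge_out_def)

definition shaped :: "nat \<Rightarrow> (nat \<times> nat) set \<Rightarrow> bool" where
  "shaped h S \<longleftrightarrow>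
     (\<forall>i j. (i, j) \<in> Om (2*h+1) \<longrightarrow> wedge_in h i j \<longrightarrow> (i, j) \<in> S) \<and>
     (\<forall>i j. (i, j) \<in> Om (2*h+1) \<longrightarrow> wedge_out h i j \<longrightarrow> (i, j) \<notin> S) \<and>
     (\<forall>k\<in>{1..h}. ((k, k) \<in> S \<longleftrightarrow> (2*h+2-k, 2*h+2-k) \<in> S) \<and>
                  ((k, 2*h+2-k) \<in> S \<longleftrightarrow> (2*h+2-k, k) \<in> S) \<and>
                  ((k, k) \<in> S \<longleftrightarrow> (k, 2*h+2-k) \<notin> S))"

lemma card_eq_span_iff:
  fixes R :: "nat set"
  assumes R: "R \<subseteq> {a..b}" and ends: "a \<in> R \<longleftrightarrow> b \<notin> R"
  shows "card R = b - a \<longleftrightarrow> {a<..<b} \<subseteq> R"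
proof -
  define c where "c = (if a \<in> R then a else b)"
  have "a < b" using R ends by (cases "a < b") auto
  then have R_eq: "R = insert c (R \<inter> {a<..<b})" and c: "c \<notin> {a<..<b}"
    using R ends by (auto simp: c_def subset_iff le_less)
  have "card R = Suc (card (R \<inter> {a<..<b}))"
    using c by (subst R_eq) simp
  moreover have "card {a<..<b} = b - a - 1" by simp
  ultimately have "card R = b - a \<longleftrightarrow> card (R \<inter> {a<..<b}) = card {a<..<b}"
    using \<open>a < b\<close> by linarith
  also have "\<dots> \<longleftrightarrow> {a<..<b} \<subseteq> R"
    by (metis Int_lower2 card_subset_eq finite_greaterThanLessThan inf.absorb_iff2)
  finally show ?thesis .
qed

(* Necessity, by induction on the row k <= h: the earlier rows of the top wedge,
   rotated, exclude the cells of row k outside [k, 2h+2-k]; alternation allows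
   only one of the two corners; the row count then forces the whole interior. *)
lemma alternating_top_wedge:
  assumes S: "S \<subseteq> Om (2*h+1)" and alt: "alternating h S"
    and rows: "\<And>k. k \<in> {1..h} \<Longrightarrow> card {j. (k, j) \<in> S} = 2*h+2-2*k"
  shows "1 \<le> k \<Longrightarrow> k < j \<Longrightarrow> j < 2*h+2-k \<Longrightarrow> (k, j) \<in> S"
proof (induction k arbitrary: j rule: less_induct)
  case (less k)
  define R where "R = {j. (k, j) \<in> S}"
  have k: "k \<in> {1..h}" using less.prems by auto
  have span: "R \<subseteq> {k..2*h+2-k}"
  proof
    fix x assume "x \<in> R"
    then have kx: "(k, x) \<in> S" "(k, x) \<in> Om (2*h+1)" using S by (auto simp: R_def)
    show "x \<in> {k..2*h+2-k}"
    proof (rule ccontr)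
      assume "x \<notin> {k..2*h+2-k}"
      then consider "x < k" | "2*h+2-k < x" by auto
      then show False
      proof cases
        case 1
        \<comment> \<open>the rotation sends \<open>(k,x)\<close> to \<open>(x,2h+2-k)\<close>, an earlier row of the top wedge\<close>
        have "(x, 2*h+2-k) \<in> S" using less.IH[of x "2*h+2-k"] 1 kx k by auto
        then show False using alt kx unfolding alternating_def by blast
      next
        case 2
        \<comment> \<open>\<open>(k,x)\<close> is the rotation of \<open>(2h+2-x,k)\<close>, an earlier row of the top wedge\<close>
        define y where "y = 2*h+2-x"
        have y: "(y, k) \<in> S" "(y, k) \<in> Om (2*h+1)" "2*h+2-y = x"
          using less.IH[of y k] 2 kx k by (auto simp: y_def)
        then show False using alt kx unfolding alternating_def by metis
      qed
    qed
  qed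
  have "(k, k) \<in> Om (2*h+1)" using k by auto
  then have ends: "k \<in> R \<longleftrightarrow> 2*h+2-k \<notin> R"
    using alt unfolding alternating_def R_def by auto
  have "card R = 2*h+2-k - k" using rows[OF k] by (simp add: R_def)
  then have "{k<..<2*h+2-k} \<subseteq> R" using card_eq_span_iff[OF span ends] by simp
  then show ?case using less.prems by (auto simp: R_def)
qed

(* A valid set is shaped: the bottom wedge follows from the top one by the
   half turn, the side wedges by one quarter turn, and the diagonal corners
   alternate because the quarter turn cycles them. *)
lemma valid_shaped:
  assumes V: "valid (2*h+1) S"
  shows "shaped h S"
proof -
  have S: "S \<subseteq> Om (2*h+1)" using V by (simp add: valid_def)
  have alt: "alternating h S"
    using V tau_image_complement_iff[OF S] by (simp add: valid_def)
  have "card {j. (k, j) \<in> S} = 2*h+2-2*k" if "k \<in> {1..h}" for k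
  proof -
    have "int (card {j. (k, j) \<in> S}) = \<bar>int k - int (2*h+2-k)\<bar>"
      using V that by (simp add: valid_def bar_def)
    then show ?thesis using that by simp
  qed
  note top = alternating_top_wedge[OF S alt this]
  have wedge_in: "(i, j) \<in> S" if ij: "(i, j) \<in> Om (2*h+1)" "wedge_in h i j" for i j
  proof (cases "i < j")
    case True
    then show ?thesis using top[of i j] ij by (auto simp: wedge_in_def)
  next
    case False
    \<comment> \<open>a cell of the bottom wedge is the half-turn image of a cell of the top wedge\<close>
    then have "(2*h+2-i, 2*h+2-j) \<in> S" using top[of "2*h+2-i" "2*h+2-j"] ij
      by (auto simp: wedge_in_def)
    then show ?thesis using alternating_rotate_half[OF alt ij(1)] by blast
  qed
  have wedge_out: "(i, j) \<notin> S" if ij: "(i, j) \<in> Om (2*h+1)" "wedge_out h i j" for i j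
  proof -
    have "(j, 2*h+2-i) \<in> Om (2*h+1)" using ij by auto
    then have "(j, 2*h+2-i) \<in> S" using wedge_in wedge_in_rotate[OF ij(1)] ij(2) by blast
    then show ?thesis using alt ij unfolding alternating_def by blast
  qed
  have diagonals: "((k, k) \<in> S \<longleftrightarrow> (2*h+2-k, 2*h+2-k) \<in> S) \<and>
                  ((k, 2*h+2-k) \<in> S \<longleftrightarrow> (2*h+2-k, k) \<in> S) \<and>
                  ((k, k) \<in> S \<longleftrightarrow> (k, 2*h+2-k) \<notin> S)" if k: "k \<in> {1..h}" for k
  proof -
    \<comment> \<open>the rotation cycles \<open>(k,k) \<mapsto> (k,2h+2-k) \<mapsto> (2h+2-k,2h+2-k) \<mapsto> (2h+2-k,k)\<close>\<close>
    have "(k, k) \<in> Om (2*h+1)" "(k, 2*h+2-k) \<in> Om (2*h+1)" "(2*h+2-k, 2*h+2-k) \<in> Om (2*h+1)"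
      and "2*h+2-(2*h+2-k) = k" using k by auto
    then have "(k, 2*h+2-k) \<in> S \<longleftrightarrow> (k, k) \<notin> S"
      "(2*h+2-k, 2*h+2-k) \<in> S \<longleftrightarrow> (k, 2*h+2-k) \<notin> S"
      "(2*h+2-k, k) \<in> S \<longleftrightarrow> (2*h+2-k, 2*h+2-k) \<notin> S"
      using alt unfolding alternating_def by metis+
    then show ?thesis by blast
  qed
  show ?thesis unfolding shaped_def using wedge_in wedge_out diagonals by blast
qed

lemma shaped_diagonal:
  assumes sh: "shaped h S" and ij: "(i, j) \<in> Om (2*h+1)" and diag: "j = i \<or> j = 2*h+2-i"
  shows "(i, j) \<in> S \<longleftrightarrow> ((min i (2*h+2-i), min i (2*h+2-i)) \<in> S \<longleftrightarrow> j = i)"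
proof -
  define k where "k = min i (2*h+2-i)"
  have k: "k \<in> {1..h}" "i = k \<or> i = 2*h+2-k" "k \<noteq> 2*h+2-k"
    using ij diag by (auto simp: k_def)
  then have "((k, k) \<in> S \<longleftrightarrow> (2*h+2-k, 2*h+2-k) \<in> S) \<and>
             ((k, 2*h+2-k) \<in> S \<longleftrightarrow> (2*h+2-k, k) \<in> S) \<and>
             ((k, k) \<in> S \<longleftrightarrow> (k, 2*h+2-k) \<notin> S)"
    using sh unfolding shaped_def by blast
  then show ?thesis using k diag unfolding k_def[symmetric] by auto
qed

(* Sufficiency of the tau-condition: the quarter turn swaps forced-in and
   forced-out wedges and swaps main- and anti-diagonal corners of a ring. *)
lemma shaped_alternating:
  assumes sh: "shaped h S"
  shows "alternating h S"
  unfolding alternating_def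
proof (intro allI impI)
  fix i j assume ij: "(i, j) \<in> Om (2*h+1)"
  have rot: "(j, 2*h+2-i) \<in> Om (2*h+1)" using ij by auto
  note wedge_in = sh[unfolded shaped_def, THEN conjunct1, rule_format]
  note wedge_out = sh[unfolded shaped_def, THEN conjunct2, THEN conjunct1, rule_format]
  show "(j, 2*h+2-i) \<in> S \<longleftrightarrow> (i, j) \<notin> S"
  proof (cases rule: Om_odd_cases[OF ij])
    case 1
    then show ?thesis using wedge_in[OF ij] wedge_out[OF rot] wedge_out_rotate[OF ij] by blast
  next
    case 2
    then show ?thesis using wedge_out[OF ij] wedge_in[OF rot] wedge_in_rotate[OF ij] by blast
  next
    case 3
    \<comment> \<open>the rotation moves a main-diagonal cell to an anti-diagonal cell of the same ring, and back\<close>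
    moreover have "min j (2*h+2-j) = min i (2*h+2-i)" "2*h+2-i \<noteq> j" using 3 ij by auto
    ultimately show ?thesis using shaped_diagonal[OF sh ij] shaped_diagonal[OF sh rot] by auto
  next
    case 4
    moreover have "min j (2*h+2-j) = min i (2*h+2-i)" "j \<noteq> i" using 4 ij by auto
    ultimately show ?thesis using shaped_diagonal[OF sh ij] shaped_diagonal[OF sh rot] by auto
  qed
qed

(* Row k <= h of a shaped set is one corner plus the interior of [k, 2h+2-k]. *)
lemma shaped_top_row_card:
  assumes S: "S \<subseteq> Om (2*h+1)" and sh: "shaped h S" and k: "k \<in> {1..h}"
  shows "card {j. (k, j) \<in> S} = 2*h+2-2*k"
proof -
  define R where "R = {j. (k, j) \<in> S}"
  note wedge_in = sh[unfolded shaped_def, THEN conjunct1, rule_format]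
  note wedge_out = sh[unfolded shaped_def, THEN conjunct2, THEN conjunct1, rule_format]
  have span: "R \<subseteq> {k..2*h+2-k}"
  proof
    fix j assume "j \<in> R"
    then have kj: "(k, j) \<in> S" "(k, j) \<in> Om (2*h+1)" using S by (auto simp: R_def)
    then have "\<not> wedge_out h k j" using wedge_out by blast
    then show "j \<in> {k..2*h+2-k}" using kj k by (auto simp: wedge_out_def)
  qed
  have "(k, k) \<in> S \<longleftrightarrow> (k, 2*h+2-k) \<notin> S" using sh k unfolding shaped_def by blast
  then have ends: "k \<in> R \<longleftrightarrow> 2*h+2-k \<notin> R" by (simp add: R_def)
  have "{k<..<2*h+2-k} \<subseteq> R" using wedge_in k by (auto simp: R_def wedge_in_def)
  then show ?thesis using card_eq_span_iff[OF span ends] by (simp add: R_def)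
qed

(* The row condition (iii) of validity holds for every row of a shaped set: the
   middle row is empty and the lower rows mirror the upper ones. *)
lemma shaped_row_card:
  assumes S: "S \<subseteq> Om (2*h+1)" and sh: "shaped h S" and i: "i \<in> {1..2*h+1}"
  shows "int (card {j. (i, j) \<in> S}) = \<bar>int i - int (2*h+2-i)\<bar>"
proof -
  consider "i \<le> h" | "i = h+1" | "h+2 \<le> i" by linarith
  then show ?thesis
  proof cases
    case 1
    then show ?thesis using shaped_top_row_card[OF S sh, of i] i by simp
  next
    case 2
    \<comment> \<open>every cell of the middle row lies in the left or right wedge\<close>
    have "(i, j) \<notin> S" for j
    proof
      assume ij: "(i, j) \<in> S"
      then have "(i, j) \<in> Om (2*h+1)" using S by blast
      moreover from this have "wedge_out h i j" using 2 by (auto simp: wedge_out_def)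
      ultimately show False using sh ij unfolding shaped_def by blast
    qed
    then show ?thesis using 2 by simp
  next
    case 3
    \<comment> \<open>the half-turn maps row \<open>2h+2-i\<close> of \<open>S\<close> onto row \<open>i\<close>\<close>
    define k where "k = 2*h+2-i"
    have k: "k \<in> {1..h}" "2*h+2-k = i" using 3 i by (auto simp: k_def)
    note half_turn = alternating_rotate_half[OF shaped_alternating[OF sh]]
    have "{j. (i, j) \<in> S} = (\<lambda>j. 2*h+2-j) ` {j. (k, j) \<in> S}"
    proof (intro set_eqI iffI)
      fix j assume j: "j \<in> {j. (i, j) \<in> S}"
      then have ij: "(i, j) \<in> Om (2*h+1)" using S by blast
      then have "(k, 2*h+2-j) \<in> S" "j = 2*h+2-(2*h+2-j)"
        using half_turn[OF ij] j by (auto simp: k_def)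
      then show "j \<in> (\<lambda>j. 2*h+2-j) ` {j. (k, j) \<in> S}" by blast
    next
      fix j assume "j \<in> (\<lambda>j. 2*h+2-j) ` {j. (k, j) \<in> S}"
      then obtain l where l: "(k, l) \<in> S" "j = 2*h+2-l" by blast
      then have "(k, l) \<in> Om (2*h+1)" using S by blast
      then show "j \<in> {j. (i, j) \<in> S}" using half_turn l k by auto
    qed
    moreover have "inj_on (\<lambda>j. 2*h+2-j) {j. (k, j) \<in> S}"
      using S by (force simp: inj_on_def)
    ultimately have "card {j. (i, j) \<in> S} = 2*h+2-2*k"
      using shaped_top_row_card[OF S sh k(1)] by (simp add: card_image)
    then show ?thesis using 3 i by (simp add: k_def)
  qed
qed

lemma shaped_valid:
  assumes S: "S \<subseteq> Om (2*h+1)" and sh: "shaped h S"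
  shows "valid (2*h+1) S"
proof -
  have alt: "alternating h S" using shaped_alternating[OF sh] .
  show ?thesis unfolding valid_def
    using S tau_image_complement_iff[OF S] alt card_alternating[OF S alt]
      shaped_row_card[OF S sh] by (simp add: bar_def)
qed

definition canonical :: "nat \<Rightarrow> nat set \<Rightarrow> (nat \<times> nat) set" where
  "canonical h T = {(i, j) \<in> Om (2*h+1). wedge_in h i j \<or>
     ((j = i \<or> j = 2*h+2-i) \<and> (min i (2*h+2-i) \<in> T \<longleftrightarrow> j = i))}"

lemma canonical_shaped:
  assumes T: "T \<subseteq> {1..h}"
  shows "shaped h (canonical h T)"
proof -
  have "((k, k) \<in> canonical h T \<longleftrightarrow> k \<in> T) \<and>
        ((2*h+2-k, 2*h+2-k) \<in> canonical h T \<longleftrightarrow> k \<in> T) \<and>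
        ((k, 2*h+2-k) \<in> canonical h T \<longleftrightarrow> k \<notin> T) \<and>
        ((2*h+2-k, k) \<in> canonical h T \<longleftrightarrow> k \<notin> T)" if "k \<in> {1..h}" for k
    using that diagonal_not_wedge[of _ _ h] by (auto simp: canonical_def min_def)
  moreover have "(i, j) \<notin> canonical h T" if "(i, j) \<in> Om (2*h+1)" "wedge_out h i j" for i j
    using wedge_out_exclusive[OF that] by (simp add: canonical_def)
  ultimately show ?thesis unfolding shaped_def by (auto simp: canonical_def)
qed

lemma canonical_diagonal:
  assumes T: "T \<subseteq> {1..h}"
  shows "{k \<in> {1..h}. (k, k) \<in> canonical h T} = T"
  using T diagonal_not_wedge[of _ _ h] by (auto simp: canonical_def min_def)

lemma shaped_eq_canonical:
  assumes S: "S \<subseteq> Om (2*h+1)" and sh: "shaped h S"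
  shows "S = canonical h {k \<in> {1..h}. (k, k) \<in> S}"
proof (intro set_eqI)
  fix p :: "nat \<times> nat"
  obtain i j where p: "p = (i, j)" by (cases p)
  show "p \<in> S \<longleftrightarrow> p \<in> canonical h {k \<in> {1..h}. (k, k) \<in> S}"
  proof (cases "(i, j) \<in> Om (2*h+1)")
    case False
    then show ?thesis using S p by (auto simp: canonical_def)
  next
    case ij: True
    then show ?thesis
    proof (cases rule: Om_odd_cases)
      case 1
      then show ?thesis using sh ij p unfolding shaped_def canonical_def by auto
    next
      case 2
      then show ?thesis using sh ij p wedge_out_exclusive[OF ij]
        unfolding shaped_def canonical_def by auto
    next
      case 3
      then show ?thesis using shaped_diagonal[OF sh ij] ij p diagonal_not_wedge[OF ij]
        by (auto simp: canonical_def)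
    next
      case 4
      then show ?thesis using shaped_diagonal[OF sh ij] ij p diagonal_not_wedge[OF ij]
        by (auto simp: canonical_def)
    qed
  qed
qed

lemma valid_iff_shaped: "S \<subseteq> Om (2*h+1) \<Longrightarrow> valid (2*h+1) S \<longleftrightarrow> shaped h S"
  using valid_shaped shaped_valid by blast

lemma card_valid: "card {S. valid (2*h+1) S} = 2^h"
proof -
  have "{S. valid (2*h+1) S} = canonical h ` Pow {1..h}"
  proof (intro equalityI subsetI)
    fix S assume "S \<in> {S. valid (2*h+1) S}"
    then have "S \<subseteq> Om (2*h+1)" "shaped h S" using valid_shaped by (auto simp: valid_def)
    then show "S \<in> canonical h ` Pow {1..h}"
      using shaped_eq_canonical by blast
  next
    fix S assume "S \<in> canonical h ` Pow {1..h}"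
    then obtain T where "T \<subseteq> {1..h}" "S = canonical h T" by blast
    moreover have "canonical h T \<subseteq> Om (2*h+1)" by (auto simp: canonical_def)
    ultimately show "S \<in> {S. valid (2*h+1) S}" using shaped_valid canonical_shaped by blast
  qed
  moreover have "inj_on (canonical h) (Pow {1..h})"
    by (rule inj_on_inverseI[where g = "\<lambda>S. {k \<in> {1..h}. (k, k) \<in> S}"])
       (use canonical_diagonal in blast)
  ultimately show ?thesis by (simp add: card_image card_Pow)
qed

lemma shaped_iff_conditions:
  "shaped h S \<longleftrightarrow>
     {(i, j) \<in> Om (2*h+1). (i < j \<and> i < bar (2*h+1) j) \<or> (i > j \<and> i > bar (2*h+1) j)} \<subseteq> S \<and>
     {(i, j) \<in> Om (2*h+1). (i > j \<and> i < bar (2*h+1) j) \<or> (i < j \<and> i > bar (2*h+1) j)} \<inter> S = {} \<and>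
     (\<forall>i. 1 \<le> i \<and> i \<le> h \<longrightarrow>
        (let A = ({(i, i), (bar (2*h+1) i, bar (2*h+1) i)} \<subseteq> S \<and>
                  {(i, bar (2*h+1) i), (bar (2*h+1) i, i)} \<inter> S = {});
             B = ({(i, bar (2*h+1) i), (bar (2*h+1) i, i)} \<subseteq> S \<and>
                  {(i, i), (bar (2*h+1) i, bar (2*h+1) i)} \<inter> S = {})
         in (A \<and> \<not> B) \<or> (\<not> A \<and> B)))"
proof -
  have bar: "bar (2*h+1) x = 2*h+2-x" for x by (simp add: bar_def)
  have wedges_in:
    "{(i, j) \<in> Om (2*h+1). (i < j \<and> i < bar (2*h+1) j) \<or> (i > j \<and> i > bar (2*h+1) j)} \<subseteq> S \<longleftrightarrow>
     (\<forall>i j. (i, j) \<in> Om (2*h+1) \<longrightarrow> wedge_in h i j \<longrightarrow> (i, j) \<in> S)"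
    unfolding bar wedge_in_def by auto
  have wedges_out:
    "{(i, j) \<in> Om (2*h+1). (i > j \<and> i < bar (2*h+1) j) \<or> (i < j \<and> i > bar (2*h+1) j)} \<inter> S = {} \<longleftrightarrow>
     (\<forall>i j. (i, j) \<in> Om (2*h+1) \<longrightarrow> wedge_out h i j \<longrightarrow> (i, j) \<notin> S)"
    unfolding bar wedge_out_def by auto
  have diagonal: "(let A = ({(i, i), (bar (2*h+1) i, bar (2*h+1) i)} \<subseteq> S \<and>
                  {(i, bar (2*h+1) i), (bar (2*h+1) i, i)} \<inter> S = {});
             B = ({(i, bar (2*h+1) i), (bar (2*h+1) i, i)} \<subseteq> S \<and>
                  {(i, i), (bar (2*h+1) i, bar (2*h+1) i)} \<inter> S = {})
         in (A \<and> \<not> B) \<or> (\<not> A \<and> B)) \<longleftrightarrow>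
      ((i, i) \<in> S \<longleftrightarrow> (2*h+2-i, 2*h+2-i) \<in> S) \<and>
      ((i, 2*h+2-i) \<in> S \<longleftrightarrow> (2*h+2-i, i) \<in> S) \<and>
      ((i, i) \<in> S \<longleftrightarrow> (i, 2*h+2-i) \<notin> S)" for i
    unfolding Let_def bar by auto
  show ?thesis
    unfolding shaped_def wedges_in wedges_out diagonal atLeastAtMost_iff Ball_def by blast
qed

(* The theorem: write m = 2h+1 and combine the characterisation with the count. *)
theorem lemma6p6:
  fixes m :: nat
  assumes "odd m" and "m > 1"
  shows "(\<forall>S. S \<subseteq> Om m \<longrightarrow>
           (valid m S \<longleftrightarrow>
              {(i, j) \<in> Om m. (i < j \<and> i < bar m j) \<or> (i > j \<and> i > bar m j)} \<subseteq> S \<and>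
              {(i, j) \<in> Om m. (i > j \<and> i < bar m j) \<or> (i < j \<and> i > bar m j)} \<inter> S = {} \<and>
              (\<forall>i. 1 \<le> i \<and> i \<le> (m - 1) div 2 \<longrightarrow>
                 (let A = ({(i, i), (bar m i, bar m i)} \<subseteq> S \<and> {(i, bar m i), (bar m i, i)} \<inter> S = {});
                      B = ({(i, bar m i), (bar m i, i)} \<subseteq> S \<and> {(i, i), (bar m i, bar m i)} \<inter> S = {})
                  in (A \<and> \<not> B) \<or> (\<not> A \<and> B)))))
         \<and> card {S. valid m S} = 2 ^ ((m - 1) div 2)"
proof -
  obtain h where m: "m = 2*h+1" using \<open>odd m\<close> oddE by blast
  have half: "(m - 1) div 2 = h" using m by simp
  show ?thesis
    unfolding half unfolding m shaped_iff_conditions[symmetric]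
    using valid_iff_shaped card_valid by blast
qed

end
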